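(* Let $k\ge1$ and $R\neq0$. Consider an indecomposable linear differential system $$y'=\Big(\frac{A_0+A_1x+\dots+A_kx^k}{x^{k+1}}+\frac{\widehat A_R}{x-R}\Big)y=\frac{B(x)}{x^{k+1}(x-R)}y,\qquad y\in\mathbb{C}^n,$$ where $A_0$ is diagonal with distinct eigenvalues. Then there exist $n-1$ distinct pairs $(i_\ell,j_\ell)$ with $i_\ell\neq j_\ell$, $\ell=1,\dots,n-1$, and exponents $m_{i_\ell,j_\ell}\in\{1,\dots,k+1\}$, with the following property. The equation is conjugate, by means of an invertible diagonal transformation, to a unique system in which the coefficient of the monomial $x^{m_{i_\ell,j_\ell}}$ of the entry $(B)_{i_\ell,j_\ell}$ equals $1$ for each $\ell$. The only automorphisms of this normalized unique system are the scalar matrices $cI_n$, $c\in\mathbb{C}^*$.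
   Context: The system is indecomposable if it cannot be gauge transformed to a block diagonal form. An automorphism of the system is an invertible gauge transformation $y=gz$ transforming the system into itself. *)

theory Defs
  imports "HOL-Analysis.Analysis"
begin

text \<open>System y' = B(x)/(x^(k+1)(x-R)) y with
  B(x) = (A_0 + ... + A_k x^k)(x - R) + Ahat x^(k+1).
  Bcoef k R A Ahat m is the coefficient matrix of x^m in B(x), for m = 0..k+1.\<close>
definition Bcoef :: "nat \<Rightarrow> complex \<Rightarrow> (nat \<Rightarrow> complex^'n^'n) \<Rightarrow> complex^'n^'n \<Rightarrow> nat \<Rightarrow> complex^'n^'n" where
  "Bcoef k R A Ahat m = (\<chi> i j.
      (if 1 \<le> m \<and> m \<le> k + 1 then A (m - 1) $ i $ j else 0)
    - (if m \<le> k then R * (A m $ i $ j) else 0)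
    + (if m = k + 1 then Ahat $ i $ j else 0))"

text \<open>Constant gauge transformation y = g z acting on a coefficient matrix.\<close>
definition gauge :: "complex^'n^'n \<Rightarrow> complex^'n^'n \<Rightarrow> complex^'n^'n" where
  "gauge g M = matrix_inv g ** M ** g"

definition isdiag :: "complex^'n^'n \<Rightarrow> bool" where
  "isdiag D \<longleftrightarrow> (\<forall>i j. i \<noteq> j \<longrightarrow> D $ i $ j = 0)"

definition indecomposable :: "nat \<Rightarrow> complex \<Rightarrow> (nat \<Rightarrow> complex^'n^'n) \<Rightarrow> complex^'n^'n \<Rightarrow> bool" where
  "indecomposable k R A Ahat \<longleftrightarrow>
     \<not> (\<exists>g S. invertible g \<and> S \<noteq> {} \<and> S \<noteq> UNIV \<and>
          (\<forall>m \<le> k + 1. \<forall>i j. (i \<in> S) \<noteq> (j \<in> S) \<longrightarrow>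
               gauge g (Bcoef k R A Ahat m) $ i $ j = 0))"

definition normalizing :: "nat \<Rightarrow> complex \<Rightarrow> (nat \<Rightarrow> complex^'n^'n) \<Rightarrow> complex^'n^'n
    \<Rightarrow> (nat \<Rightarrow> 'n \<times> 'n) \<Rightarrow> ('n \<times> 'n \<Rightarrow> nat) \<Rightarrow> complex^'n^'n \<Rightarrow> bool" where
  "normalizing k R A Ahat p mexp D \<longleftrightarrow> isdiag D \<and> invertible D \<and>
     (\<forall>l < CARD('n) - 1.
        gauge D (Bcoef k R A Ahat (mexp (p l))) $ fst (p l) $ snd (p l) = 1)"

end

theory Submission
  imports Defs
begin

(* Since A_0 is diagonal with distinct eigenvalues, every automorphism commutes with the
   constant coefficient -R A_0 of B and is therefore diagonal, and a diagonal gauge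
   transformation diag(d) multiplies the entry (i,j) of every coefficient by d_j / d_i.
   Call i and j coupled if some coefficient of x^m, 1 <= m <= k+1, of B has a nonzero
   (i,j) entry.  Testing indecomposability with g = I shows that the coupling graph is
   connected, so it has a spanning tree with n-1 edges.  Along a tree the ratios d_j / d_i
   can be prescribed freely, which normalizes one nonzero entry per edge to 1; conversely
   these n-1 conditions determine d up to a common scalar, which gives uniqueness.  For a
   diagonal automorphism the normalized entries force equal diagonal entries along every
   edge of the tree, hence g = c I. *)

lemma matrix_inv_inverse:
  fixes A :: "'a::semiring_1^'n^'n"
  assumes "invertible A"
  shows "A ** matrix_inv A = mat 1" "matrix_inv A ** A = mat 1"
  using someI_ex[OF assms[unfolded invertible_def]] by (simp_all add: matrix_inv_def)

lemma matrix_inv_unique: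
  fixes A B :: "'a::semiring_1^'n^'n"
  assumes "A ** B = mat 1" "B ** A = mat 1"
  shows "matrix_inv A = B"
proof -
  have "invertible A" using assms unfolding invertible_def by blast
  have "matrix_inv A = matrix_inv A ** (A ** B)" using assms by simp
  also have "\<dots> = B" using matrix_inv_inverse[OF \<open>invertible A\<close>] by (simp add: matrix_mul_assoc)
  finally show ?thesis .
qed

lemma gauge_eq_self_iff_commute:
  assumes "invertible g"
  shows "gauge g X = X \<longleftrightarrow> X ** g = g ** X"
proof
  assume "gauge g X = X"
  then have "g ** (matrix_inv g ** X ** g) = g ** X" by (simp add: gauge_def)
  then show "X ** g = g ** X" using matrix_inv_inverse[OF assms] by (simp add: matrix_mul_assoc)
next
  assume "X ** g = g ** X"
  have "gauge g X = matrix_inv g ** (X ** g)" by (simp add: gauge_def matrix_mul_assoc)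
  also have "\<dots> = (matrix_inv g ** g) ** X" by (simp add: \<open>X ** g = g ** X\<close> matrix_mul_assoc)
  finally show "gauge g X = X" using matrix_inv_inverse[OF assms] by simp
qed

subsection \<open>Diagonal matrices\<close>

definition diag_mat :: "('n \<Rightarrow> 'a::zero) \<Rightarrow> 'a^'n^'n" where
  "diag_mat d = (\<chi> i j. if i = j then d i else 0)"

lemma matrix_mul_diag_mat_right:
  fixes M :: "'a::semiring_1^'n^'m"
  shows "(M ** diag_mat d) $ i $ j = M $ i $ j * d j"
proof -
  have "(M ** diag_mat d) $ i $ j = (\<Sum>l\<in>UNIV. M $ i $ l * (if l = j then d l else 0))"
    by (simp add: matrix_matrix_mult_def diag_mat_def)
  also have "\<dots> = (\<Sum>l\<in>UNIV. if l = j then M $ i $ l * d l else 0)"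
    by (rule sum.cong) auto
  also have "\<dots> = M $ i $ j * d j" by simp
  finally show ?thesis .
qed

lemma matrix_mul_diag_mat_left:
  fixes M :: "'a::semiring_1^'m^'n"
  shows "(diag_mat d ** M) $ i $ j = d i * M $ i $ j"
proof -
  have "(diag_mat d ** M) $ i $ j = (\<Sum>l\<in>UNIV. (if i = l then d i else 0) * M $ l $ j)"
    by (simp add: matrix_matrix_mult_def diag_mat_def)
  also have "\<dots> = (\<Sum>l\<in>UNIV. if l = i then d i * M $ i $ j else 0)"
    by (rule sum.cong) auto
  also have "\<dots> = d i * M $ i $ j" by simp
  finally show ?thesis .
qed

lemma diag_mat_mult: "diag_mat a ** diag_mat b = diag_mat (\<lambda>i. a i * b i :: 'a::semiring_1)"
  by (simp add: vec_eq_iff matrix_mul_diag_mat_right) (simp add: diag_mat_def)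

lemma mat_eq_diag_mat: "mat c = diag_mat (\<lambda>_. c)"
  by (simp add: vec_eq_iff diag_mat_def mat_def)

lemma isdiag_iff_diag_mat: "isdiag D \<longleftrightarrow> D = diag_mat (\<lambda>i. D $ i $ i)"
  by (auto simp: isdiag_def vec_eq_iff diag_mat_def)

lemma invertible_diag_mat_iff:
  "invertible (diag_mat d :: 'a::field^'n^'n) \<longleftrightarrow> (\<forall>i. d i \<noteq> 0)"
proof
  assume "invertible (diag_mat d :: 'a^'n^'n)"
  then obtain B :: "'a^'n^'n" where "diag_mat d ** B = mat 1" unfolding invertible_def by blast
  then have "d i * B $ i $ i = 1" for i
    using matrix_mul_diag_mat_left[of d B i i] by (simp add: mat_def)
  then show "\<forall>i. d i \<noteq> 0" by (metis mult_zero_left zero_neq_one)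
next
  assume "\<forall>i. d i \<noteq> 0"
  then show "invertible (diag_mat d :: 'a^'n^'n)" unfolding invertible_def
    by (intro exI[of _ "diag_mat (\<lambda>i. inverse (d i))"]) (simp add: diag_mat_mult mat_eq_diag_mat)
qed

lemma matrix_inv_diag_mat:
  fixes d :: "'n::finite \<Rightarrow> 'a::field"
  assumes "\<forall>i. d i \<noteq> 0"
  shows "matrix_inv (diag_mat d) = diag_mat (\<lambda>i. inverse (d i))"
  by (rule matrix_inv_unique) (simp_all add: diag_mat_mult mat_eq_diag_mat assms)

lemma gauge_diag_mat_nth:
  assumes "\<forall>i. d i \<noteq> 0"
  shows "gauge (diag_mat d) M $ i $ j = M $ i $ j * d j / d i"
  by (simp add: gauge_def matrix_inv_diag_mat[OF assms] matrix_mul_diag_mat_right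
      matrix_mul_diag_mat_left field_simps)

lemma gauge_diag_mat_mult_const:
  assumes "c \<noteq> 0" "\<forall>i. d i \<noteq> 0"
  shows "gauge (diag_mat (\<lambda>i. c * d i)) M = gauge (diag_mat d) M"
  using assms by (simp add: vec_eq_iff gauge_diag_mat_nth)

lemma gauge_mat:
  assumes "c \<noteq> 0"
  shows "gauge (mat c) X = X"
  using assms by (simp add: vec_eq_iff mat_eq_diag_mat gauge_diag_mat_nth)

lemma isdiag_if_commute_diag_mat:
  fixes a :: "'n::finite \<Rightarrow> complex" and g :: "complex^'n^'n"
  assumes "diag_mat a ** g = g ** diag_mat a" "inj a"
  shows "isdiag g"
  unfolding isdiag_def
proof (intro allI impI)
  fix i j :: 'n assume "i \<noteq> j"
  have "a i * g $ i $ j = g $ i $ j * a j"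
    using arg_cong[OF assms(1), of "\<lambda>M. M $ i $ j"]
    by (simp add: matrix_mul_diag_mat_left matrix_mul_diag_mat_right)
  moreover have "a i \<noteq> a j" using assms(2) \<open>i \<noteq> j\<close> by (meson injD)
  ultimately show "g $ i $ j = 0" by (metis mult.commute mult_right_cancel)
qed

lemma commute_diag_mat_nth_eq:
  fixes X :: "'a::idom^'n^'n"
  assumes "X ** diag_mat e = diag_mat e ** X" "X $ i $ j \<noteq> 0"
  shows "e i = e j"
proof -
  have "X $ i $ j * e j = e i * X $ i $ j"
    using arg_cong[OF assms(1), of "\<lambda>M. M $ i $ j"]
    by (simp add: matrix_mul_diag_mat_left matrix_mul_diag_mat_right)
  then show ?thesis using assms(2) by (simp add: mult.commute)
qed

subsection \<open>Spanning trees and diagonal scalings\<close>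

definition spanning :: "('n \<times> 'n) set \<Rightarrow> bool" where
  "spanning S \<longleftrightarrow> (\<forall>x y. (x, y) \<in> (S \<union> S\<inverse>)\<^sup>*)"

lemma constant_if_spanning:
  assumes "spanning S" "\<forall>(i, j)\<in>S. e i = e j"
  shows "e x = e y"
  using assms(1)[unfolded spanning_def, rule_format, of x y] by induction (use assms(2) in auto)

lemma sym_rtrancl_insert:
  assumes "V \<times> V \<subseteq> (S \<union> S\<inverse>)\<^sup>*" "S \<subseteq> T" "i \<in> V" "(i, j) \<in> T \<union> T\<inverse>"
  shows "insert j V \<times> insert j V \<subseteq> (T \<union> T\<inverse>)\<^sup>*"
proof -
  have "(S \<union> S\<inverse>)\<^sup>* \<subseteq> (T \<union> T\<inverse>)\<^sup>*" using assms(2) by (intro rtrancl_mono) auto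
  moreover have "(j, i) \<in> (T \<union> T\<inverse>)\<^sup>*" "(i, j) \<in> (T \<union> T\<inverse>)\<^sup>*" using assms(4) by auto
  ultimately have "(x, i) \<in> (T \<union> T\<inverse>)\<^sup>* \<and> (i, x) \<in> (T \<union> T\<inverse>)\<^sup>*" if "x \<in> insert j V" for x
    using that assms(1,3) by blast
  then show ?thesis by (auto intro: rtrancl_trans)
qed

lemma extend_diagonal_scaling:
  fixes d :: "'n \<Rightarrow> 'a::field"
  assumes "\<forall>i. d i \<noteq> 0" "w \<noteq> 0" "a \<noteq> b" "j \<in> {a, b}"
  obtains d' where "\<forall>i. d' i \<noteq> 0" "\<forall>i. i \<noteq> j \<longrightarrow> d' i = d i" "w * d' b / d' a = 1"
proof (cases "j = b")
  case True
  then show ?thesis using assms by (intro that[of "d(b := d a / w)"]) auto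
next
  case False
  then have "j = a" using assms(4) by simp
  then show ?thesis using assms by (intro that[of "d(a := w * d b)"]) auto
qed

lemma partial_spanning_tree_with_scaling:
  fixes E :: "'n::finite \<Rightarrow> 'n \<Rightarrow> bool" and w :: "'n \<Rightarrow> 'n \<Rightarrow> 'a::field"
  assumes crossing: "\<And>V. V \<noteq> {} \<Longrightarrow> V \<noteq> UNIV \<Longrightarrow> \<exists>i\<in>V. \<exists>j. j \<notin> V \<and> (E i j \<or> E j i)"
    and weight_nonzero: "\<And>i j. E i j \<Longrightarrow> w i j \<noteq> 0"
    and "t < CARD('n)"
  shows "\<exists>V ps. card V = Suc t \<and> distinct ps \<and> length ps = t \<and>
    (\<forall>(i, j)\<in>set ps. E i j \<and> i \<in> V \<and> j \<in> V) \<and>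
    V \<times> V \<subseteq> (set ps \<union> (set ps)\<inverse>)\<^sup>* \<and>
    (\<exists>d. (\<forall>i. d i \<noteq> 0) \<and> (\<forall>(i, j)\<in>set ps. w i j * d j / d i = 1))"
  using \<open>t < CARD('n)\<close>
proof (induction t)
  case 0
  show ?case
    by (rule exI[of _ "{undefined}"], rule exI[of _ "[]"]) (auto intro: exI[of _ "\<lambda>_. 1"])
next
  case (Suc t)
  then obtain V ps d where card: "card V = Suc t" and "distinct ps" "length ps = t"
    and edges: "\<forall>(i, j)\<in>set ps. E i j \<and> i \<in> V \<and> j \<in> V"
    and conn: "V \<times> V \<subseteq> (set ps \<union> (set ps)\<inverse>)\<^sup>*"
    and d: "\<forall>i. d i \<noteq> 0" "\<forall>(i, j)\<in>set ps. w i j * d j / d i = 1"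
    by auto
  have "V \<noteq> {}" using card by auto
  moreover have "V \<noteq> UNIV" using card Suc.prems by auto
  ultimately obtain i j where "i \<in> V" "j \<notin> V" "E i j \<or> E j i" using crossing by blast
  then obtain a b where ab: "E a b" "(a, b) = (i, j) \<or> (a, b) = (j, i)" by blast
  with \<open>i \<in> V\<close> \<open>j \<notin> V\<close> have "a \<noteq> b" "j \<in> {a, b}" by auto
  then obtain d' where d': "\<forall>i. d' i \<noteq> 0" "\<forall>i. i \<noteq> j \<longrightarrow> d' i = d i" "w a b * d' b / d' a = 1"
    using extend_diagonal_scaling[OF d(1) weight_nonzero[OF ab(1)]] by blast
  have "set ps \<subseteq> set (ps @ [(a, b)])" "(i, j) \<in> set (ps @ [(a, b)]) \<union> (set (ps @ [(a, b)]))\<inverse>"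
    using ab(2) by auto
  then have "insert j V \<times> insert j V \<subseteq> (set (ps @ [(a, b)]) \<union> (set (ps @ [(a, b)]))\<inverse>)\<^sup>*"
    using sym_rtrancl_insert[OF conn _ \<open>i \<in> V\<close>] by blast
  moreover have "\<forall>(x, y)\<in>set ps. w x y * d' y / d' x = 1"
  proof clarify
    fix x y assume "(x, y) \<in> set ps"
    then have "d' x = d x" "d' y = d y" using d'(2) edges \<open>j \<notin> V\<close> by fastforce+
    then show "w x y * d' y / d' x = 1" using d(2) \<open>(x, y) \<in> set ps\<close> by auto
  qed
  moreover have "(a, b) \<notin> set ps" using edges ab(2) \<open>j \<notin> V\<close> by auto
  ultimately show ?case
    using card \<open>distinct ps\<close> \<open>length ps = t\<close> edges ab \<open>i \<in> V\<close> \<open>j \<notin> V\<close> d'(1,3)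
    by (intro exI[of _ "insert j V"] exI[of _ "ps @ [(a, b)]"]) (auto intro!: exI[of _ d'])
qed

lemma spanning_tree_with_scaling:
  fixes E :: "'n::finite \<Rightarrow> 'n \<Rightarrow> bool" and w :: "'n \<Rightarrow> 'n \<Rightarrow> 'a::field"
  assumes "\<And>V. V \<noteq> {} \<Longrightarrow> V \<noteq> UNIV \<Longrightarrow> \<exists>i\<in>V. \<exists>j. j \<notin> V \<and> (E i j \<or> E j i)"
    and "\<And>i j. E i j \<Longrightarrow> w i j \<noteq> 0"
  obtains ps d where "distinct ps" "length ps = CARD('n) - 1" "\<forall>(i, j)\<in>set ps. E i j"
    "spanning (set ps)" "\<forall>i. d i \<noteq> 0" "\<forall>(i, j)\<in>set ps. w i j * d j / d i = 1"
proof -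
  obtain V ps d where "card V = CARD('n)" "distinct ps" "length ps = CARD('n) - 1"
    "\<forall>(i, j)\<in>set ps. E i j \<and> i \<in> V \<and> j \<in> V" "V \<times> V \<subseteq> (set ps \<union> (set ps)\<inverse>)\<^sup>*"
    "\<forall>i. d i \<noteq> 0" "\<forall>(i, j)\<in>set ps. w i j * d j / d i = 1"
    using partial_spanning_tree_with_scaling[where E = E and w = w and t = "CARD('n) - 1", OF assms]
    by fastforce
  moreover from \<open>card V = CARD('n)\<close> have "V = UNIV" by (simp add: card_eq_UNIV_imp_eq_UNIV)
  ultimately show thesis by (intro that) (auto simp: spanning_def)
qed

lemma diagonal_scaling_unique:
  fixes d1 d2 :: "'n \<Rightarrow> 'a::field"
  assumes "spanning S"
    and "\<forall>i. d1 i \<noteq> 0" "\<forall>i. d2 i \<noteq> 0"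
    and "\<forall>(i, j)\<in>S. w i j * d1 j / d1 i = 1" "\<forall>(i, j)\<in>S. w i j * d2 j / d2 i = 1"
  obtains c where "c \<noteq> 0" "\<forall>i. d2 i = c * d1 i"
proof -
  have "\<forall>(i, j)\<in>S. d2 i / d1 i = d2 j / d1 j"
  proof clarify
    fix i j assume "(i, j) \<in> S"
    then have "w i j * d1 j / d1 i = 1" "w i j * d2 j / d2 i = 1" using assms(4,5) by fast+
    then have "d1 i = w i j * d1 j" "d2 i = w i j * d2 j" "w i j \<noteq> 0" using assms(2,3) by (auto simp: field_simps)
    then show "d2 i / d1 i = d2 j / d1 j" by simp
  qed
  then have "d2 i / d1 i = d2 x / d1 x" for i x
    using constant_if_spanning[OF \<open>spanning S\<close>, of "\<lambda>i. d2 i / d1 i"] by blast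
  then show thesis using assms(2,3) by (intro that[of "d2 undefined / d1 undefined"]) (auto simp: field_simps)
qed

subsection \<open>Coupling graph of the system\<close>

definition coupled :: "nat \<Rightarrow> (nat \<Rightarrow> 'a::zero^'n^'n) \<Rightarrow> 'n \<Rightarrow> 'n \<Rightarrow> bool" where
  "coupled N B i j \<longleftrightarrow> i \<noteq> j \<and> (\<exists>m. 1 \<le> m \<and> m \<le> N \<and> B m $ i $ j \<noteq> 0)"

definition coupling_exponent :: "(nat \<Rightarrow> 'a::zero^'n^'n) \<Rightarrow> 'n \<times> 'n \<Rightarrow> nat" where
  "coupling_exponent B = (\<lambda>(i, j). LEAST m. 1 \<le> m \<and> B m $ i $ j \<noteq> 0)"

lemma coupling_exponent:
  assumes "coupled N B i j"
  shows "1 \<le> coupling_exponent B (i, j)" "coupling_exponent B (i, j) \<le> N"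
    "B (coupling_exponent B (i, j)) $ i $ j \<noteq> 0"
proof -
  from assms obtain m where m: "1 \<le> m" "m \<le> N" "B m $ i $ j \<noteq> 0" unfolding coupled_def by blast
  then show "1 \<le> coupling_exponent B (i, j)" "B (coupling_exponent B (i, j)) $ i $ j \<noteq> 0"
    unfolding coupling_exponent_def using LeastI[of "\<lambda>m. 1 \<le> m \<and> B m $ i $ j \<noteq> 0" m] by auto
  have "coupling_exponent B (i, j) \<le> m" unfolding coupling_exponent_def using m by (auto intro: Least_le)
  then show "coupling_exponent B (i, j) \<le> N" using m(2) by simp
qed

lemma Bcoef_0_nth: "Bcoef k R A Ahat 0 $ i $ j = - (R * A 0 $ i $ j)"
  by (simp add: Bcoef_def)

lemma indecomposable_imp_crossing_coupled:
  assumes "indecomposable k R A Ahat" "isdiag (A 0)" "V \<noteq> {}" "V \<noteq> UNIV"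
  shows "\<exists>i\<in>V. \<exists>j. j \<notin> V \<and>
    (coupled (k + 1) (Bcoef k R A Ahat) i j \<or> coupled (k + 1) (Bcoef k R A Ahat) j i)"
proof (rule ccontr)
  assume no_crossing: "\<not> ?thesis"
  have "gauge (mat 1) (Bcoef k R A Ahat m) $ i $ j = 0" if "m \<le> k + 1" "(i \<in> V) \<noteq> (j \<in> V)" for m i j
  proof (cases "m = 0")
    case True
    moreover have "i \<noteq> j" using that(2) by auto
    ultimately show ?thesis using assms(2) by (simp add: gauge_mat Bcoef_0_nth isdiag_def)
  next
    case False
    have "\<not> coupled (k + 1) (Bcoef k R A Ahat) i j" using no_crossing that(2) by blast
    then show ?thesis using False that by (auto simp: coupled_def gauge_mat)
  qed
  then have "\<exists>g S. invertible g \<and> S \<noteq> {} \<and> S \<noteq> UNIV \<and> (\<forall>m \<le> k + 1. \<forall>i j.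
      (i \<in> S) \<noteq> (j \<in> S) \<longrightarrow> gauge g (Bcoef k R A Ahat m) $ i $ j = 0)"
    using assms(3,4) invertible_diag_mat_iff[of "\<lambda>_. 1"]
    by (intro exI[of _ "mat 1"] exI[of _ V]) (auto simp: mat_eq_diag_mat)
  with assms(1) show False unfolding indecomposable_def by blast
qed

lemma normalizing_diag_mat_iff:
  assumes "length ps = CARD('n) - 1"
  shows "normalizing k R A Ahat ((!) ps) mexp (diag_mat d :: complex^'n^'n) \<longleftrightarrow>
    (\<forall>i. d i \<noteq> 0) \<and> (\<forall>(i, j)\<in>set ps. Bcoef k R A Ahat (mexp (i, j)) $ i $ j * d j / d i = 1)"
proof -
  have "isdiag (diag_mat d)" by (simp add: isdiag_def diag_mat_def)
  show ?thesis
  proof (cases "\<forall>i. d i \<noteq> 0")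
    case True
    then show ?thesis
      unfolding normalizing_def invertible_diag_mat_iff assms[symmetric] gauge_diag_mat_nth[OF True]
      using \<open>isdiag (diag_mat d)\<close> by (simp add: all_set_conv_all_nth case_prod_unfold)
  next
    case False
    then show ?thesis unfolding normalizing_def invertible_diag_mat_iff by blast
  qed
qed

lemma normalizing_iff:
  fixes D :: "complex^'n^'n"
  assumes "length ps = CARD('n) - 1"
  shows "normalizing k R A Ahat ((!) ps) mexp D \<longleftrightarrow> (\<exists>d. D = diag_mat d \<and> (\<forall>i. d i \<noteq> 0) \<and>
    (\<forall>(i, j)\<in>set ps. Bcoef k R A Ahat (mexp (i, j)) $ i $ j * d j / d i = 1))"
proof
  assume "normalizing k R A Ahat ((!) ps) mexp D"
  moreover from this obtain d where "D = diag_mat d"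
    unfolding normalizing_def isdiag_iff_diag_mat by blast
  ultimately show "\<exists>d. D = diag_mat d \<and> (\<forall>i. d i \<noteq> 0) \<and>
      (\<forall>(i, j)\<in>set ps. Bcoef k R A Ahat (mexp (i, j)) $ i $ j * d j / d i = 1)"
    using normalizing_diag_mat_iff[OF assms] by blast
qed (use normalizing_diag_mat_iff[OF assms] in blast)

lemma normalized_system_unique:
  fixes D1 D2 :: "complex^'n^'n"
  assumes "length ps = CARD('n) - 1" "spanning (set ps)"
    and "normalizing k R A Ahat ((!) ps) mexp D1" "normalizing k R A Ahat ((!) ps) mexp D2"
  shows "gauge D1 (Bcoef k R A Ahat m) = gauge D2 (Bcoef k R A Ahat m)"
proof -
  obtain d1 d2 where D: "D1 = diag_mat d1" "D2 = diag_mat d2"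
    and d1: "\<forall>i. d1 i \<noteq> 0" "\<forall>(i, j)\<in>set ps. Bcoef k R A Ahat (mexp (i, j)) $ i $ j * d1 j / d1 i = 1"
    and d2: "\<forall>i. d2 i \<noteq> 0" "\<forall>(i, j)\<in>set ps. Bcoef k R A Ahat (mexp (i, j)) $ i $ j * d2 j / d2 i = 1"
    using assms(3,4) unfolding normalizing_iff[OF assms(1)] by blast
  obtain c where "c \<noteq> 0" "\<forall>i. d2 i = c * d1 i"
    using diagonal_scaling_unique[OF assms(2) d1(1) d2(1) d1(2) d2(2)] by blast
  then show ?thesis unfolding D using gauge_diag_mat_mult_const d1(1) by (metis ext)
qed

lemma normalized_automorphism_iff_scalar:
  fixes A :: "nat \<Rightarrow> complex^'n^'n" and D g :: "complex^'n^'n"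
  assumes "R \<noteq> 0" "isdiag (A 0)" "inj (\<lambda>i. A 0 $ i $ i)"
    and "length ps = CARD('n) - 1" "spanning (set ps)"
    and exponents: "\<forall>(i, j)\<in>set ps. mexp (i, j) \<le> k + 1"
    and "normalizing k R A Ahat ((!) ps) mexp D" "invertible g"
  shows "(\<forall>m \<le> k + 1. gauge g (gauge D (Bcoef k R A Ahat m)) = gauge D (Bcoef k R A Ahat m))
    \<longleftrightarrow> (\<exists>c. c \<noteq> 0 \<and> g = mat c)"
proof
  obtain d where D: "D = diag_mat d" and "\<forall>i. d i \<noteq> 0"
    and normalized: "\<forall>(i, j)\<in>set ps. Bcoef k R A Ahat (mexp (i, j)) $ i $ j * d j / d i = 1"
    using assms(7) unfolding normalizing_iff[OF assms(4)] by blast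
  let ?X = "\<lambda>m. gauge D (Bcoef k R A Ahat m)"
  assume "\<forall>m \<le> k + 1. gauge g (?X m) = ?X m"
  then have commute: "?X m ** g = g ** ?X m" if "m \<le> k + 1" for m
    using gauge_eq_self_iff_commute[OF \<open>invertible g\<close>] that by blast
  have "?X 0 $ i $ j = diag_mat (\<lambda>i. - (R * A 0 $ i $ i)) $ i $ j" for i j
    unfolding D gauge_diag_mat_nth[OF \<open>\<forall>i. d i \<noteq> 0\<close>] Bcoef_0_nth using assms(2) \<open>\<forall>i. d i \<noteq> 0\<close>
    by (simp add: diag_mat_def isdiag_def)
  then have "?X 0 = diag_mat (\<lambda>i. - (R * A 0 $ i $ i))" by (simp add: vec_eq_iff)
  moreover have "inj (\<lambda>i. - (R * A 0 $ i $ i))" using assms(1,3) by (auto simp: inj_def)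
  ultimately have "isdiag g" using commute[of 0] by (intro isdiag_if_commute_diag_mat) auto
  then have g: "g = diag_mat (\<lambda>i. g $ i $ i)" unfolding isdiag_iff_diag_mat .
  have "\<forall>(i, j)\<in>set ps. g $ i $ i = g $ j $ j"
  proof clarify
    fix i j assume "(i, j) \<in> set ps"
    then have "?X (mexp (i, j)) ** g = g ** ?X (mexp (i, j))" "?X (mexp (i, j)) $ i $ j = 1"
      using commute exponents normalized \<open>\<forall>i. d i \<noteq> 0\<close> by (auto simp: D gauge_diag_mat_nth)
    then show "g $ i $ i = g $ j $ j" using commute_diag_mat_nth_eq[of _ "\<lambda>i. g $ i $ i" i j] g by simp
  qed
  then have "g $ i $ i = g $ j $ j" for i j
    using constant_if_spanning[OF \<open>spanning (set ps)\<close>, of "\<lambda>i. g $ i $ i"] by blast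
  moreover define c where "c = g $ undefined $ undefined"
  ultimately have "(\<lambda>i. g $ i $ i) = (\<lambda>_. c)" by blast
  then have "g = mat c" using g by (metis mat_eq_diag_mat)
  moreover have "c \<noteq> 0"
    using \<open>invertible g\<close> unfolding \<open>g = mat c\<close> mat_eq_diag_mat invertible_diag_mat_iff by simp
  ultimately show "\<exists>c. c \<noteq> 0 \<and> g = mat c" by blast
qed (use gauge_mat in blast)

theorem mainTheorem7:
  fixes k :: nat and R :: complex
    and A :: "nat \<Rightarrow> complex^'n^'n" and Ahat :: "complex^'n^'n"
  assumes "k \<ge> 1" and "R \<noteq> 0"
    and "isdiag (A 0)" and "inj (\<lambda>i. A 0 $ i $ i)"
    and "indecomposable k R A Ahat"
  shows "\<exists>(p :: nat \<Rightarrow> 'n \<times> 'n) (mexp :: 'n \<times> 'n \<Rightarrow> nat).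
     inj_on p {..<CARD('n) - 1} \<and>
     (\<forall>l < CARD('n) - 1. fst (p l) \<noteq> snd (p l) \<and> 1 \<le> mexp (p l) \<and> mexp (p l) \<le> k + 1) \<and>
     (\<exists>D. normalizing k R A Ahat p mexp D) \<and>
     (\<forall>D1 D2. normalizing k R A Ahat p mexp D1 \<and> normalizing k R A Ahat p mexp D2 \<longrightarrow>
        (\<forall>m \<le> k + 1. gauge D1 (Bcoef k R A Ahat m) = gauge D2 (Bcoef k R A Ahat m))) \<and>
     (\<forall>D. normalizing k R A Ahat p mexp D \<longrightarrow>
        (\<forall>g. invertible g \<longrightarrow>
           ((\<forall>m \<le> k + 1. gauge g (gauge D (Bcoef k R A Ahat m)) = gauge D (Bcoef k R A Ahat m))
            \<longleftrightarrow> (\<exists>c. c \<noteq> 0 \<and> g = mat c))))"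
proof -
  let ?B = "Bcoef k R A Ahat" and ?mexp = "coupling_exponent (Bcoef k R A Ahat)"
  have crossing: "\<exists>i\<in>V. \<exists>j. j \<notin> V \<and> (coupled (k + 1) ?B i j \<or> coupled (k + 1) ?B j i)"
    if "V \<noteq> {}" "V \<noteq> UNIV" for V
    using indecomposable_imp_crossing_coupled[OF assms(5,3) that] .
  have nonzero: "?B (?mexp (i, j)) $ i $ j \<noteq> 0" if "coupled (k + 1) ?B i j" for i j
    using coupling_exponent(3)[OF that] .
  obtain ps d where ps: "distinct ps" "length ps = CARD('n) - 1"
      "\<forall>(i, j)\<in>set ps. coupled (k + 1) ?B i j" "spanning (set ps)"
    and d: "\<forall>i. d i \<noteq> 0" "\<forall>(i, j)\<in>set ps. ?B (?mexp (i, j)) $ i $ j * d j / d i = 1"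
    by (rule spanning_tree_with_scaling[where E = "coupled (k + 1) ?B" and
          w = "\<lambda>i j. ?B (?mexp (i, j)) $ i $ j", OF crossing nonzero])
  have exponents: "\<forall>(i, j)\<in>set ps. ?mexp (i, j) \<le> k + 1" using ps(3) coupling_exponent(2) by blast
  show ?thesis
  proof (intro exI[of _ "(!) ps"] exI[of _ ?mexp] conjI allI impI)
    show "inj_on ((!) ps) {..<CARD('n) - 1}" using ps(1,2) by (simp add: inj_on_nth)
  next
    fix l assume "l < CARD('n) - 1"
    moreover obtain i j where ij: "ps ! l = (i, j)" by fastforce
    ultimately have coupled: "coupled (k + 1) ?B i j" using ps(2,3) nth_mem[of l ps] by auto
    then show "fst (ps ! l) \<noteq> snd (ps ! l)" "1 \<le> ?mexp (ps ! l)" "?mexp (ps ! l) \<le> k + 1"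
      using coupling_exponent(1,2)[OF coupled] ij by (simp_all add: coupled_def)
  next
    show "\<exists>D. normalizing k R A Ahat ((!) ps) ?mexp D"
      unfolding normalizing_iff[OF ps(2)] using d by blast
  next
    fix D1 D2 m
    assume "normalizing k R A Ahat ((!) ps) ?mexp D1 \<and> normalizing k R A Ahat ((!) ps) ?mexp D2"
    then show "gauge D1 (?B m) = gauge D2 (?B m)" using normalized_system_unique[OF ps(2,4)] by blast
  next
    fix D g :: "complex^'n^'n"
    assume "normalizing k R A Ahat ((!) ps) ?mexp D" "invertible g"
    with normalized_automorphism_iff_scalar[where k = k and A = A and Ahat = Ahat,
        OF assms(2-4) ps(2,4) exponents]
    show "(\<forall>m \<le> k + 1. gauge g (gauge D (?B m)) = gauge D (?B m)) \<longleftrightarrow> (\<exists>c. c \<noteq> 0 \<and> g = mat c)"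
      by blast
  qed
qed

end
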